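(* Let $H^L$ and $\blacktriangleright$ be as in the context, and for $\alpha=1,\dots,n$ let $\hat y_\alpha:=\hat x_\beta(\mathcal O^{-1})^\beta_\alpha\in H^L$. Then for all $\hat f,\hat g\in U(\mathfrak g^L)$: (1) $\hat x_\alpha\hat f=(\mathcal O^\beta_\alpha\blacktriangleright\hat f)\,\hat x_\beta$; (2) $\mathcal O^\gamma_\alpha\blacktriangleright(\hat g\hat f)=(\mathcal O^\beta_\alpha\blacktriangleright\hat g)(\mathcal O^\gamma_\beta\blacktriangleright\hat f)$; (3) $(\mathcal O^{-1})^\gamma_\alpha\blacktriangleright(\hat g\hat f)=((\mathcal O^{-1})^\gamma_\beta\blacktriangleright\hat g)((\mathcal O^{-1})^\beta_\alpha\blacktriangleright\hat f)$; (4) $\hat y_\alpha\blacktriangleright\hat f=\hat f\hat x_\alpha$; (5) $(\hat x_\alpha\blacktriangleright\hat f)\hat g=(\mathcal O^\beta_\alpha\blacktriangleright\hat f)(\hat x_\beta\blacktriangleright\hat g)$.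
   Context: Let $k$ be a field of characteristic zero and $\mathfrak g$ a Lie algebra over $k$ of finite dimension $n$ with basis $\hat x_1,\dots,\hat x_n$ and $[\hat x_\mu,\hat x_\nu]=C^\lambda_{\mu\nu}\hat x_\lambda$. Summation over repeated indices is understood. Write $U(\mathfrak g^L):=U(\mathfrak g)$, a cocommutative Hopf algebra with $\hat x_\mu$ primitive; Sweedler notation $\Delta(u)=\sum u_{(1)}\otimes u_{(2)}$, counit $\epsilon$. Let $\hat S(\mathfrak g^* ):=k[[\partial^1,\dots,\partial^n]]$ (commutative formal power series) and $\epsilon_S:\hat S(\mathfrak g^* )\to k$ the constant-term map. Let $\mathcal C$ be the $n\times n$ matrix with entries $\mathcal C^\alpha_\beta:=C^\alpha_{\beta\gamma}\partial^\gamma$, $\phi:=\frac{-\mathcal C}{e^{-\mathcal C}-1}=\sum_{N\ge0}\frac{(-1)^NB_N}{N!}\mathcal C^N$ ($B_N$ Bernoulli numbers), and $\mathcal O:=e^{\mathcal C}$, with inverse $\mathcal O^{-1}=e^{-\mathcal C}$ (entries in $\hat S(\mathfrak g^* )$). It is known (and assumed) that there is a unique right Hopf action $\triangleleft$ of $U(\mathfrak g^L)$ on $\hat S(\mathfrak g^* )$ (i.e. $(a\triangleleft u)\triangleleft v=a\triangleleft(uv)$, $(ab)\triangleleft u=\sum(a\triangleleft u_{(1)})(b\triangleleft u_{(2)})$, $1\triangleleft u=\epsilon(u)1$) such that $a\mapsto a\triangleleft\hat x_\alpha$ is the continuous derivation sending $\partial^\beta\mapsto\phi^\beta_\alpha$.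 $H^L=U(\mathfrak g^L)\sharp\hat S(\mathfrak g^* )$ is the vector space $U(\mathfrak g^L)\otimes\hat S(\mathfrak g^* )$ with product $(u\sharp a)(u'\sharp a')=\sum uu'_{(1)}\sharp(a\triangleleft u'_{(2)})a'$, where $u\equiv u\sharp1$, $a\equiv1\sharp a$ (so $[\partial^\mu,\hat x_\nu]=\phi^\mu_\nu$). The (left) black action $\blacktriangleright:H^L\otimes U(\mathfrak g^L)\to U(\mathfrak g^L)$ is $h\blacktriangleright\hat f:=(\mathrm{id}\otimes\epsilon_S)(h\hat f)$, where the product $h\hat f$ is taken in $H^L$ and viewed as an element of $U(\mathfrak g^L)\otimes\hat S(\mathfrak g^* )$; it is the action of $H^L$ on $U(\mathfrak g^L)$ with $\partial^\mu\blacktriangleright1=0$ and $\hat f\blacktriangleright 1=\hat f$. *)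

theory Defs
  imports Complex_Main
begin

text \<open>The index set {1..n} of the basis of the Lie algebra is modelled by a finite,
linearly ordered type 'n (so n = CARD('n)).  An element of the completed symmetric
algebra k[[\<partial>^1,...,\<partial>^n]] is its coefficient function on monomials (exponent
vectors 'n => nat).\<close>

type_synonym ('n, 'k) ps = "('n \<Rightarrow> nat) \<Rightarrow> 'k"

definition unitm :: "'n \<Rightarrow> ('n \<Rightarrow> nat)" where
  "unitm g = (\<lambda>i. if i = g then 1 else 0)"

definition ps_const :: "'k::field \<Rightarrow> ('n, 'k) ps" where
  "ps_const c = (\<lambda>m. if m = (\<lambda>_. 0) then c else 0)"

definition ps_var :: "'n \<Rightarrow> ('n, 'k::field) ps" where
  "ps_var g = (\<lambda>m. if m = unitm g then 1 else 0)"

definition ps_add :: "('n, 'k::field) ps \<Rightarrow> ('n, 'k) ps \<Rightarrow> ('n, 'k) ps" where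
  "ps_add f g = (\<lambda>m. f m + g m)"

definition ps_smult :: "'k::field \<Rightarrow> ('n, 'k) ps \<Rightarrow> ('n, 'k) ps" where
  "ps_smult c f = (\<lambda>m. c * f m)"

definition ps_setsum :: "'a set \<Rightarrow> ('a \<Rightarrow> ('n, 'k::field) ps) \<Rightarrow> ('n, 'k) ps" where
  "ps_setsum S F = (\<lambda>m. \<Sum>i\<in>S. F i m)"

text \<open>Cauchy product (the set of divisors p \<le> m of a monomial is finite as 'n is finite).\<close>
definition ps_mul :: "('n::finite, 'k::field) ps \<Rightarrow> ('n, 'k) ps \<Rightarrow> ('n, 'k) ps" where
  "ps_mul f g = (\<lambda>m. \<Sum>p\<in>{p. p \<le> m}. f p * g (\<lambda>i. m i - p i))"

definition ps_deriv :: "'n \<Rightarrow> ('n, 'k::field) ps \<Rightarrow> ('n, 'k) ps" where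
  "ps_deriv g f = (\<lambda>m. of_nat (Suc (m g)) * f (m(g := Suc (m g))))"

definition eps_S :: "('n, 'k) ps \<Rightarrow> 'k" where
  "eps_S f = f (\<lambda>_. 0)"

definition deg :: "('n::finite \<Rightarrow> nat) \<Rightarrow> nat" where
  "deg m = (\<Sum>i\<in>UNIV. m i)"

text \<open>Formal (coefficientwise) sum of a sequence of power series F N of order \<ge> N:
only the terms N \<le> deg m contribute to the coefficient of the monomial m.\<close>
definition fsum :: "(nat \<Rightarrow> ('n::finite, 'k::field) ps) \<Rightarrow> ('n, 'k) ps" where
  "fsum F = (\<lambda>m. \<Sum>N\<le>deg m. F N m)"

section \<open>Bernoulli numbers (B_1 = -1/2)\<close>

primrec bern_list :: "nat \<Rightarrow> rat list" where
  "bern_list 0 = [1]"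
| "bern_list (Suc N) = bern_list N @
     [ - (\<Sum>k\<le>N. of_nat (Suc (Suc N) choose k) * (bern_list N ! k)) / of_nat (Suc (Suc N))]"

definition bern :: "nat \<Rightarrow> rat" where
  "bern N = bern_list N ! N"

text \<open>Structure constants: C l m n = C^l_{mn}, i.e. [x_m, x_n] = \<Sum>_l C^l_{mn} x_l.\<close>

definition Cmat :: "('n::finite \<Rightarrow> 'n \<Rightarrow> 'n \<Rightarrow> 'k::field) \<Rightarrow> 'n \<Rightarrow> 'n \<Rightarrow> ('n, 'k) ps" where
  "Cmat C a b = ps_setsum UNIV (\<lambda>g. ps_smult (C a b g) (ps_var g))"

primrec cpow :: "('n::finite \<Rightarrow> 'n \<Rightarrow> 'n \<Rightarrow> 'k::field) \<Rightarrow> nat \<Rightarrow> 'n \<Rightarrow> 'n \<Rightarrow> ('n, 'k) ps" where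
  "cpow C 0 a b = ps_const (if a = b then 1 else 0)"
| "cpow C (Suc N) a b = ps_setsum UNIV (\<lambda>g. ps_mul (cpow C N a g) (Cmat C g b))"

text \<open>\<O> = e^\<C>, entry (a,b) is \<O>^a_b.\<close>
definition Omat :: "('n::finite \<Rightarrow> 'n \<Rightarrow> 'n \<Rightarrow> 'k::field_char_0) \<Rightarrow> 'n \<Rightarrow> 'n \<Rightarrow> ('n, 'k) ps" where
  "Omat C a b = fsum (\<lambda>N. ps_smult (1 / fact N) (cpow C N a b))"

definition Oinv :: "('n::finite \<Rightarrow> 'n \<Rightarrow> 'n \<Rightarrow> 'k::field_char_0) \<Rightarrow> 'n \<Rightarrow> 'n \<Rightarrow> ('n, 'k) ps" where
  "Oinv C a b = fsum (\<lambda>N. ps_smult ((-1) ^ N / fact N) (cpow C N a b))"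

definition phi :: "('n::finite \<Rightarrow> 'n \<Rightarrow> 'n \<Rightarrow> 'k::field_char_0) \<Rightarrow> 'n \<Rightarrow> 'n \<Rightarrow> ('n, 'k) ps" where
  "phi C a b = fsum (\<lambda>N. ps_smult ((-1) ^ N * of_rat (bern N) / fact N) (cpow C N a b))"

text \<open>a \<triangleleft> x_a: the continuous derivation sending \<partial>^b to \<phi>^b_a.\<close>
definition Dact :: "('n::finite \<Rightarrow> 'n \<Rightarrow> 'n \<Rightarrow> 'k::field_char_0) \<Rightarrow> 'n \<Rightarrow> ('n, 'k) ps \<Rightarrow> ('n, 'k) ps" where
  "Dact C a f = ps_setsum UNIV (\<lambda>b. ps_mul (ps_deriv b f) (phi C b a))"

definition lie_structure :: "('n::finite \<Rightarrow> 'n \<Rightarrow> 'n \<Rightarrow> 'k::field) \<Rightarrow> bool" where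
  "lie_structure C \<longleftrightarrow>
     (\<forall>l m n. C l m n = - C l n m) \<and>
     (\<forall>l m n r. (\<Sum>s\<in>UNIV. C s m n * C l s r + C s n r * C l s m + C s r m * C l s n) = 0)"

definition pbw :: "('n \<Rightarrow> 'u::monoid_mult) \<Rightarrow> 'n list \<Rightarrow> 'u" where
  "pbw x w = prod_list (map x w)"

text \<open>'u with the scalar embedding sc and generators x is (isomorphic to) the universal
enveloping algebra U(g): it is a k-algebra generated by elements x satisfying the
bracket relations, whose ordered (PBW) monomials form a k-basis.\<close>
definition is_Ug :: "('n::{finite,linorder} \<Rightarrow> 'n \<Rightarrow> 'n \<Rightarrow> 'k::field) \<Rightarrow> ('k \<Rightarrow> 'u::ring_1)
     \<Rightarrow> ('n \<Rightarrow> 'u) \<Rightarrow> bool" where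
  "is_Ug C sc x \<longleftrightarrow>
     (\<forall>a b. sc (a + b) = sc a + sc b) \<and> (\<forall>a b. sc (a * b) = sc a * sc b) \<and> sc 1 = 1 \<and>
     (\<forall>c u. sc c * u = u * sc c) \<and>
     (\<forall>m n. x m * x n - x n * x m = (\<Sum>l\<in>UNIV. sc (C l m n) * x l)) \<and>
     (\<forall>W c. finite W \<and> W \<subseteq> {w. sorted w} \<and> (\<Sum>w\<in>W. sc (c w) * pbw x w) = 0
            \<longrightarrow> (\<forall>w\<in>W. c w = 0)) \<and>
     (\<forall>u. \<exists>W c. finite W \<and> W \<subseteq> {w. sorted w} \<and> u = (\<Sum>w\<in>W. sc (c w) * pbw x w))"

text \<open>'h with the algebra maps iU (u \<mapsto> u \<sharp> 1) and jS (a \<mapsto> 1 \<sharp> a) is (isomorphic to)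
the smash product H^L = U(g^L) \<sharp> S^(g*): the map u \<otimes> a \<mapsto> iU u * jS a is a linear
bijection U \<otimes> S^ \<rightarrow> H (expressed with the PBW basis), and the cross relation
(1 \<sharp> a)(x_a \<sharp> 1) = x_a \<sharp> a + 1 \<sharp> (a \<triangleleft> x_a) holds; these determine the product.\<close>
definition is_HL :: "('n::{finite,linorder} \<Rightarrow> 'n \<Rightarrow> 'n \<Rightarrow> 'k::field_char_0) \<Rightarrow> ('k \<Rightarrow> 'u::ring_1)
     \<Rightarrow> ('n \<Rightarrow> 'u) \<Rightarrow> ('u \<Rightarrow> 'h::ring_1) \<Rightarrow> (('n, 'k) ps \<Rightarrow> 'h) \<Rightarrow> bool" where
  "is_HL C sc x iU jS \<longleftrightarrow>
     (\<forall>u v. iU (u + v) = iU u + iU v) \<and> (\<forall>u v. iU (u * v) = iU u * iU v) \<and> iU 1 = 1 \<and>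
     (\<forall>a b. jS (ps_add a b) = jS a + jS b) \<and> (\<forall>a b. jS (ps_mul a b) = jS a * jS b) \<and>
     (\<forall>c. jS (ps_const c) = iU (sc c)) \<and>
     (\<forall>a f. jS f * iU (x a) = iU (x a) * jS f + jS (Dact C a f)) \<and>
     (\<forall>W f. finite W \<and> W \<subseteq> {w. sorted w} \<and> (\<Sum>w\<in>W. iU (pbw x w) * jS (f w)) = 0
            \<longrightarrow> (\<forall>w\<in>W. f w = (\<lambda>_. 0))) \<and>
     (\<forall>h. \<exists>W f. finite W \<and> W \<subseteq> {w. sorted w} \<and> h = (\<Sum>w\<in>W. iU (pbw x w) * jS (f w)))"

text \<open>The black action h \<blacktriangleright> u = (id \<otimes> \<epsilon>_S)(h u).\<close>
definition black :: "('k \<Rightarrow> 'u::ring_1) \<Rightarrow> ('n::linorder \<Rightarrow> 'u) \<Rightarrow> ('u \<Rightarrow> 'h::ring_1)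
     \<Rightarrow> (('n, 'k) ps \<Rightarrow> 'h) \<Rightarrow> 'h \<Rightarrow> 'u \<Rightarrow> 'u" where
  "black sc x iU jS h u = (THE v. \<exists>W f. finite W \<and> W \<subseteq> {w. sorted w} \<and>
       h * iU u = (\<Sum>w\<in>W. iU (pbw x w) * jS (f w)) \<and>
       v = (\<Sum>w\<in>W. sc (eps_S (f w)) * pbw x w))"

end

theory Submission
  imports Defs
begin

text \<open>
  Pushing \<open>X \<in> \<hat>S(g\<^sup>*)\<close> past \<open>x\<^sub>e\<close> with the cross relation of \<open>H\<^sup>L\<close> shows that
  \<open>X \<blacktriangleright> (x\<^sub>e g) = x\<^sub>e (X \<blacktriangleright> g) + (X \<triangleleft> x\<^sub>e) \<blacktriangleright> g\<close> and \<open>X \<blacktriangleright> 1 = \<epsilon>\<^sub>S(X)\<close>.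
  By induction over PBW monomials, all five identities therefore reduce to the derivative formulas
  \<open>\<O>\<^sup>b\<^sub>a \<triangleleft> x\<^sub>e = C\<^sup>d\<^sub>a\<^sub>e \<O>\<^sup>b\<^sub>d\<close> and \<open>(\<O>\<^sup>-\<^sup>1)\<^sup>c\<^sub>a \<triangleleft> x\<^sub>e = - C\<^sup>c\<^sub>d\<^sub>e (\<O>\<^sup>-\<^sup>1)\<^sup>d\<^sub>a\<close>.
  For these, the difference \<open>A\<^sub>e\<close> of the two sides satisfies the Euler condition
  \<open>\<partial>\<^sup>e A\<^sub>e = 0\<close> (as \<open>\<partial>\<^sup>c \<phi>\<^sup>e\<^sub>c = \<partial>\<^sup>e\<close> and \<open>deg \<cdot> e\<^sup>\<C> = e\<^sup>\<C> \<C>\<close>) and, by the Jacobi identity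
  and \<open>[\<triangleleft> x\<^sub>a, \<triangleleft> x\<^sub>b] = C\<^sup>l\<^sub>a\<^sub>b \<triangleleft> x\<^sub>l\<close> (read off from associativity of \<open>H\<^sup>L\<close>), the closedness
  condition \<open>A\<^sub>a \<triangleleft> x\<^sub>b = A\<^sub>b \<triangleleft> x\<^sub>a\<close> wherever \<open>A\<close> vanishes; together they force \<open>A = 0\<close>
  degree by degree.
\<close>

section \<open>Formal power series\<close>

lemma finite_monomials_le: "finite {p :: 'n::finite \<Rightarrow> nat. p \<le> m}"
proof (rule finite_subset)
  let ?B = "{..Max (range m)}"
  show "{p. p \<le> m} \<subseteq> {p. \<forall>i. (i \<in> UNIV \<longrightarrow> p i \<in> ?B) \<and> (i \<notin> UNIV \<longrightarrow> p i = 0)}"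
  proof (intro subsetI CollectI allI conjI impI)
    fix p :: "'n \<Rightarrow> nat" and i assume "p \<in> {p. p \<le> m}"
    then show "p i \<in> ?B"
      using Max_ge[of "range m" "m i"] by (auto simp: le_fun_def intro: le_trans)
  qed simp
  show "finite {p. \<forall>i. (i \<in> (UNIV :: 'n set) \<longrightarrow> p i \<in> ?B) \<and> (i \<notin> UNIV \<longrightarrow> p i = 0)}"
    by (rule finite_set_of_finite_funs) auto
qed

lemma ps_mul_commute: "ps_mul f g = ps_mul g (f :: ('n::finite, 'k::field) ps)"
proof (rule ext)
  fix m :: "'n \<Rightarrow> nat"
  show "ps_mul f g m = ps_mul g f m"
    unfolding ps_mul_def
    by (rule sum.reindex_bij_witness[where i="\<lambda>p i. m i - p i" and j="\<lambda>p i. m i - p i"])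
       (auto simp: le_fun_def mult.commute)
qed

lemma ps_mul_assoc: "ps_mul f (ps_mul g h) = ps_mul (ps_mul f g) (h :: ('n::finite, 'k::field) ps)"
proof (rule ext)
  fix m :: "'n \<Rightarrow> nat"
  have L: "ps_mul f (ps_mul g h) m = (\<Sum>(p,q)\<in>Sigma {p. p \<le> m} (\<lambda>p. {q. q \<le> (\<lambda>i. m i - p i)}).
            f p * (g q * h (\<lambda>i. m i - p i - q i)))"
    unfolding ps_mul_def
    by (subst sum.Sigma[symmetric]) (auto simp: finite_monomials_le sum_distrib_left)
  have R: "ps_mul (ps_mul f g) h m = (\<Sum>(r,p)\<in>Sigma {r. r \<le> m} (\<lambda>r. {p. p \<le> r}).
            f p * g (\<lambda>i. r i - p i) * h (\<lambda>i. m i - r i))"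
    unfolding ps_mul_def
    by (subst sum.Sigma[symmetric]) (auto simp: finite_monomials_le sum_distrib_right)
  show "ps_mul f (ps_mul g h) m = ps_mul (ps_mul f g) h m"
    unfolding L R
    apply (rule sum.reindex_bij_witness[where i="\<lambda>(r,p). (p, \<lambda>i. r i - p i)"
                                            and j="\<lambda>(p,q). (\<lambda>i. p i + q i, p)"])
        apply (auto simp: le_fun_def mult.assoc diff_diff_add intro: order_trans)
     apply (metis add.commute le_diff_conv2)
    by (meson diff_le_mono)
qed

lemma ps_mul_left_commute:
  "ps_mul a (ps_mul b c) = ps_mul b (ps_mul a (c :: ('n::finite, 'k::field) ps))"
  by (metis ps_mul_assoc ps_mul_commute)

lemma ps_mul_sum_left:
  "finite J \<Longrightarrow> ps_mul (\<lambda>m. \<Sum>j\<in>J. X j m) g = (\<lambda>m. \<Sum>j\<in>J. ps_mul (X j) g m)"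
  unfolding ps_mul_def by (auto simp: sum_distrib_right intro!: ext sum.swap)

lemma ps_mul_add_left: "ps_mul (\<lambda>m. a m + b m) g = (\<lambda>m. ps_mul a g m + ps_mul b g m)"
  unfolding ps_mul_def by (auto simp: distrib_right sum.distrib intro!: ext)

lemma ps_mul_diff_left: "ps_mul (\<lambda>m. a m - b m) g = (\<lambda>m. ps_mul a g m - ps_mul b g m)"
  unfolding ps_mul_def by (auto simp: left_diff_distrib sum_subtractf intro!: ext)

lemma ps_mul_scale_left: "ps_mul (\<lambda>m. k * a m) g = (\<lambda>m. k * ps_mul a g m)"
  unfolding ps_mul_def by (auto simp: sum_distrib_left mult.assoc intro!: ext)

lemma ps_mul_sum_right:
  "finite J \<Longrightarrow> ps_mul g (\<lambda>m. \<Sum>j\<in>J. X j m) = (\<lambda>m. \<Sum>j\<in>J. ps_mul g (X j) m)"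
  by (simp add: ps_mul_commute[of g] ps_mul_sum_left)

lemma ps_mul_add_right: "ps_mul g (\<lambda>m. a m + b m) = (\<lambda>m. ps_mul g a m + ps_mul g b m)"
  by (simp add: ps_mul_commute[of g] ps_mul_add_left)

lemma ps_mul_diff_right: "ps_mul g (\<lambda>m. a m - b m) = (\<lambda>m. ps_mul g a m - ps_mul g b m)"
  by (simp add: ps_mul_commute[of g] ps_mul_diff_left)

lemma ps_mul_scale_right: "ps_mul g (\<lambda>m. k * a m) = (\<lambda>m. k * ps_mul g a m)"
  by (simp add: ps_mul_commute[of g] ps_mul_scale_left)

lemma ps_mul_zero_right: "ps_mul f (\<lambda>_. 0) = (\<lambda>_. 0)"
  unfolding ps_mul_def by simp

lemma ps_mul_const: "ps_mul (ps_const c) f = (\<lambda>m. c * f m)"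
proof (rule ext)
  fix m :: "'a \<Rightarrow> nat"
  have "ps_mul (ps_const c) f m
      = (\<Sum>p\<in>{p. p \<le> m}. if p = (\<lambda>_. 0) then c * f (\<lambda>i. m i - p i) else 0)"
    unfolding ps_mul_def ps_const_def by (intro sum.cong) auto
  also have "\<dots> = c * f m"
    by (subst sum.delta[OF finite_monomials_le]) (auto simp: le_fun_def)
  finally show "ps_mul (ps_const c) f m = c * f m" .
qed

lemma ps_mul_var: "ps_mul (ps_var c) f m = (if 1 \<le> m c then f (m(c := m c - 1)) else 0)"
proof -
  have "ps_mul (ps_var c) f m = (\<Sum>p\<in>{p. p \<le> m}. if p = unitm c then f (\<lambda>i. m i - p i) else 0)"
    unfolding ps_mul_def ps_var_def by (intro sum.cong) auto
  also have "\<dots> = (if 1 \<le> m c then f (\<lambda>i. m i - unitm c i) else 0)"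
    by (subst sum.delta[OF finite_monomials_le]) (auto simp: unitm_def le_fun_def)
  also have "(\<lambda>i. m i - unitm c i) = m(c := m c - 1)"
    by (auto simp: unitm_def)
  finally show ?thesis .
qed

section \<open>Degree and homogeneity\<close>

lemma component_le_deg: "m c \<le> deg m"
  unfolding deg_def by (rule member_le_sum) auto

lemma deg_mono: "p \<le> m \<Longrightarrow> deg p \<le> deg m"
  unfolding deg_def by (rule sum_mono) (auto simp: le_fun_def)

lemma deg_diff: "p \<le> m \<Longrightarrow> deg (\<lambda>i. m i - p i) = deg m - deg p"
  unfolding deg_def by (simp add: le_fun_def sum_subtractf_nat)

lemma deg_less: assumes "p \<le> m" "p \<noteq> m" shows "deg p < deg m"
proof -
  obtain i where "p i < m i"
    using assms by (auto simp: le_fun_def fun_eq_iff order.order_iff_strict)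
  then show ?thesis
    unfolding deg_def using assms(1) by (intro sum_strict_mono_ex1) (auto simp: le_fun_def)
qed

lemma deg_zero [simp]: "deg (\<lambda>_. 0) = 0"
  by (simp add: deg_def)

lemma deg_eq_0_iff: "deg m = 0 \<longleftrightarrow> m = (\<lambda>_. 0)"
  by (auto simp: deg_def)

lemma deg_fun_upd: "deg (m(c := v)) = deg m - m c + v"
proof -
  have "deg (m(c := v)) + m c = deg m + v"
    unfolding deg_def by (simp add: sum.remove[of UNIV c] algebra_simps)
  with component_le_deg[of m c] show ?thesis by linarith
qed

lemma deg_unitm [simp]: "deg (unitm c) = 1"
  unfolding deg_def unitm_def by simp

definition homog :: "nat \<Rightarrow> ('n::finite, 'k::field) ps \<Rightarrow> bool" where
  "homog N f \<longleftrightarrow> (\<forall>m. f m \<noteq> 0 \<longrightarrow> deg m = N)"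

lemma homogD: "homog N f \<Longrightarrow> deg m \<noteq> N \<Longrightarrow> f m = 0"
  unfolding homog_def by auto

lemma homog_ps_mul: assumes "homog N f" "homog M g" shows "homog (N + M) (ps_mul f g)"
  unfolding homog_def
proof (intro allI impI)
  fix m assume "ps_mul f g m \<noteq> 0"
  then obtain p where p: "p \<le> m" "f p * g (\<lambda>i. m i - p i) \<noteq> 0"
    unfolding ps_mul_def by (auto elim: sum.not_neutral_contains_not_neutral)
  hence "deg p = N" "deg (\<lambda>i. m i - p i) = M"
    using assms unfolding homog_def by auto
  with deg_diff[OF p(1)] deg_mono[OF p(1)] show "deg m = N + M" by simp
qed

lemma homog_sum: "(\<And>j. j \<in> J \<Longrightarrow> homog N (X j)) \<Longrightarrow> homog N (\<lambda>m. \<Sum>j\<in>J. X j m)"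
  unfolding homog_def by (metis sum.not_neutral_contains_not_neutral)

lemma homog_smult: "homog N f \<Longrightarrow> homog N (ps_smult c f)"
  unfolding homog_def ps_smult_def by auto

lemma homog_Cmat: "homog 1 (Cmat C a b)"
  unfolding Cmat_def ps_setsum_def
  by (rule homog_sum) (auto simp: homog_def ps_smult_def ps_var_def)

lemma Cmat_zero [simp]: "Cmat C a b (\<lambda>_. 0) = 0"
  by (rule homogD[OF homog_Cmat]) simp

lemma homog_cpow: "homog N (cpow C N a b)"
proof (induction N arbitrary: b)
  case 0
  then show ?case by (auto simp: homog_def ps_const_def)
next
  case (Suc N)
  show ?case
    unfolding cpow.simps ps_setsum_def
    by (rule homog_sum) (use homog_ps_mul[OF Suc homog_Cmat] in simp)
qed

lemma fsum_homog: assumes "\<And>N. homog N (F N)" shows "fsum F m = F (deg m) m"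
proof -
  have "fsum F m = (\<Sum>N\<le>deg m. if deg m = N then F N m else 0)"
    unfolding fsum_def by (intro sum.cong refl) (auto intro: homogD[OF assms])
  then show ?thesis by simp
qed

lemma Omat_coeff: "Omat C a b m = cpow C (deg m) a b m / fact (deg m)"
  unfolding Omat_def by (subst fsum_homog) (simp_all only: homog_smult homog_cpow, simp add: ps_smult_def)

lemma Oinv_coeff: "Oinv C a b m = (-1) ^ deg m * cpow C (deg m) a b m / fact (deg m)"
  unfolding Oinv_def by (subst fsum_homog) (simp_all only: homog_smult homog_cpow, simp add: ps_smult_def)

lemma phi_coeff:
  "phi C a b m = (-1) ^ deg m * of_rat (bern (deg m)) * cpow C (deg m) a b m / fact (deg m)"
  unfolding phi_def by (subst fsum_homog) (simp_all only: homog_smult homog_cpow, simp add: ps_smult_def)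

section \<open>The derivations \<open>a \<mapsto> a \<triangleleft> x\<^sub>b\<close>\<close>

lemma lie_structure_antisym: "lie_structure C \<Longrightarrow> C l m n = - C l n m"
  unfolding lie_structure_def by blast

lemma lie_structure_ad_bracket:
  assumes "lie_structure C"
  shows "(\<Sum>l\<in>UNIV. C l a b * C e g l)
       = (\<Sum>d\<in>UNIV. C d g a * C e d b) - (\<Sum>d\<in>UNIV. C d g b * C e d a)"
proof -
  have anti: "C l m n = - C l n m" for l m n
    using assms by (rule lie_structure_antisym)
  have "(\<Sum>s\<in>UNIV. C s a b * C e s g) + (\<Sum>s\<in>UNIV. C s b g * C e s a)
      + (\<Sum>s\<in>UNIV. C s g a * C e s b) = 0"
    using assms[unfolded lie_structure_def, THEN conjunct2, rule_format, where l=e and m=a and n=b and r=g]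
    by (simp only: sum.distrib)
  moreover have "(\<Sum>l\<in>UNIV. C l a b * C e g l) = - (\<Sum>l\<in>UNIV. C l a b * C e l g)"
    by (subst anti) (simp add: sum_negf)
  moreover have "(\<Sum>d\<in>UNIV. C d g b * C e d a) = - (\<Sum>d\<in>UNIV. C d b g * C e d a)"
    by (subst anti) (simp add: sum_negf)
  ultimately show ?thesis
    by algebra
qed

lemma Cmat_eq: "Cmat C a b = (\<lambda>m. \<Sum>g\<in>UNIV. C a b g * ps_var g m)"
  unfolding Cmat_def ps_setsum_def ps_smult_def ..

lemma Dact_eq: "Dact C b f = (\<lambda>m. \<Sum>e\<in>UNIV. ps_mul (ps_deriv e f) (phi C e b) m)"
  unfolding Dact_def ps_setsum_def ..

lemma Dact_add: "Dact C b (\<lambda>m. X m + Y m) = (\<lambda>m. Dact C b X m + Dact C b Y m)"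
  unfolding Dact_eq ps_deriv_def
  by (simp add: distrib_left ps_mul_add_left sum.distrib)

lemma Dact_diff: "Dact C b (\<lambda>m. X m - Y m) = (\<lambda>m. Dact C b X m - Dact C b Y m)"
  unfolding Dact_eq ps_deriv_def
  by (simp add: right_diff_distrib ps_mul_diff_left sum_subtractf)

lemma Dact_scale: "Dact C b (\<lambda>m. k * X m) = (\<lambda>m. k * Dact C b X m)"
  unfolding Dact_eq ps_deriv_def
  by (simp add: mult.left_commute[of _ k] ps_mul_scale_left sum_distrib_left)

lemma Dact_sum:
  "finite J \<Longrightarrow> Dact C b (\<lambda>m. \<Sum>j\<in>J. X j m) = (\<lambda>m. \<Sum>j\<in>J. Dact C b (X j) m)"
  unfolding Dact_eq ps_deriv_def
  by (simp add: sum_distrib_left ps_mul_sum_left sum.swap[of _ UNIV])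

text \<open>Only \<open>\<phi> = 1 + O(\<partial>)\<close> contributes to the coefficients of lowest degree.\<close>

lemma Dact_lowest_degree:
  assumes low: "\<And>m'. deg m' < Suc (deg m) \<Longrightarrow> X m' = 0"
  shows "Dact C b X m = of_nat (Suc (m b)) * X (m(b := Suc (m b)))"
proof -
  have "ps_deriv e X p = 0" if "p \<le> m" "p \<noteq> m" for e p
  proof -
    have "deg (p(e := Suc (p e))) < Suc (deg m)"
      using deg_less[OF that] component_le_deg[of p e] by (simp add: deg_fun_upd)
    then show ?thesis by (simp add: ps_deriv_def low)
  qed
  then have "ps_mul (ps_deriv e X) (phi C e b) m = ps_deriv e X m * phi C e b (\<lambda>_. 0)" for e
    unfolding ps_mul_def
    by (subst sum.remove[OF finite_monomials_le, of m]) (auto intro!: sum.neutral)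
  then have "Dact C b X m = (\<Sum>e\<in>UNIV. ps_deriv e X m * phi C e b (\<lambda>_. 0))"
    by (simp add: Dact_eq)
  also have "\<dots> = ps_deriv b X m"
    by (simp add: phi_coeff bern_def ps_const_def deg_def if_distrib[of "\<lambda>x. _ * x"] cong: if_cong)
  finally show ?thesis by (simp add: ps_deriv_def)
qed

text \<open>Antisymmetry makes \<open>\<partial>\<^sup>c \<C>\<^sup>g\<^sub>c = C\<^sup>g\<^sub>c\<^sub>h \<partial>\<^sup>c\<partial>\<^sup>h\<close> vanish, hence \<open>\<partial>\<^sup>c \<phi>\<^sup>e\<^sub>c = \<partial>\<^sup>e\<close>, and the
  derivations \<open>X \<mapsto> X \<triangleleft> x\<^sub>c\<close> satisfy the Euler identity \<open>\<partial>\<^sup>c (X \<triangleleft> x\<^sub>c) = deg \<cdot> X\<close>.\<close>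

lemma sum_var_Cmat:
  fixes C :: "'n::finite \<Rightarrow> 'n \<Rightarrow> 'n \<Rightarrow> 'k::field_char_0"
  assumes "lie_structure C"
  shows "(\<Sum>c\<in>UNIV. ps_mul (ps_var c) (Cmat C g c) m) = 0"
proof -
  define S where "S = (\<Sum>c\<in>UNIV. \<Sum>h\<in>UNIV. C g c h * ps_mul (ps_var c) (ps_var h) m)"
  have "S = (\<Sum>h\<in>UNIV. \<Sum>c\<in>UNIV. C g c h * ps_mul (ps_var h) (ps_var c) m)"
    unfolding S_def by (subst sum.swap) (simp only: ps_mul_commute[of "ps_var _" "ps_var _"])
  also have "\<dots> = - S"
    unfolding S_def sum_negf[symmetric]
  proof (intro sum.cong refl)
    fix h c
    show "C g c h * ps_mul (ps_var h) (ps_var c) m = - (C g h c * ps_mul (ps_var h) (ps_var c) m)"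
      using lie_structure_antisym[OF assms, of g c h] by simp
  qed
  finally have "S = 0" by simp
  then show ?thesis
    by (simp add: S_def Cmat_eq ps_mul_sum_right ps_mul_scale_right)
qed

lemma sum_var_cpow_Suc:
  fixes C :: "'n::finite \<Rightarrow> 'n \<Rightarrow> 'n \<Rightarrow> 'k::field_char_0"
  assumes "lie_structure C"
  shows "(\<Sum>c\<in>UNIV. ps_mul (ps_var c) (cpow C (Suc N) e c) m) = 0"
proof -
  have "(\<Sum>c\<in>UNIV. ps_mul (ps_var c) (cpow C (Suc N) e c) m)
      = (\<Sum>c\<in>UNIV. \<Sum>g\<in>UNIV. ps_mul (cpow C N e g) (ps_mul (ps_var c) (Cmat C g c)) m)"
    by (simp only: cpow.simps ps_setsum_def ps_mul_sum_right finite_UNIV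
        ps_mul_left_commute[of "ps_var _"])
  also have "\<dots> = (\<Sum>g\<in>UNIV. ps_mul (cpow C N e g)
                      (\<lambda>m. \<Sum>c\<in>UNIV. ps_mul (ps_var c) (Cmat C g c) m) m)"
    by (subst sum.swap) (simp add: ps_mul_sum_right)
  also have "\<dots> = 0"
    by (simp add: sum_var_Cmat[OF assms] ps_mul_zero_right)
  finally show ?thesis .
qed

lemma sum_var_phi:
  fixes C :: "'n::finite \<Rightarrow> 'n \<Rightarrow> 'n \<Rightarrow> 'k::field_char_0"
  assumes "lie_structure C"
  shows "(\<Sum>c\<in>UNIV. ps_mul (ps_var c) (phi C e c) m) = ps_var e m"
proof (cases "deg m")
  case 0
  then have "m = (\<lambda>_. 0)" by (simp add: deg_eq_0_iff)
  moreover have "(\<lambda>_. 0::nat) \<noteq> unitm e" by (auto simp: unitm_def fun_eq_iff)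
  ultimately show ?thesis by (simp add: ps_mul_var, simp add: ps_var_def)
next
  case (Suc N)
  define \<kappa> :: 'k where "\<kappa> = (-1) ^ N * of_rat (bern N) / fact N"
  have "ps_mul (ps_var c) (phi C e c) m = \<kappa> * ps_mul (ps_var c) (cpow C N e c) m" for c
    using Suc component_le_deg[of m c]
    by (simp add: ps_mul_var phi_coeff deg_fun_upd \<kappa>_def)
  then have "(\<Sum>c\<in>UNIV. ps_mul (ps_var c) (phi C e c) m)
           = \<kappa> * (\<Sum>c\<in>UNIV. ps_mul (ps_var c) (cpow C N e c) m)"
    by (simp add: sum_distrib_left)
  also have "\<dots> = ps_var e m"
  proof (cases N)
    case 0
    then have "\<kappa> = 1" by (simp add: \<kappa>_def bern_def)
    with 0 show ?thesis
      by (simp add: ps_mul_commute[of "ps_var _"] ps_mul_const if_distrib[of "\<lambda>x. x * _"] cong: if_cong)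
  next
    case (Suc M)
    with \<open>deg m = Suc N\<close> have "ps_var e m = 0"
      by (auto simp: ps_var_def)
    with Suc show ?thesis
      using sum_var_cpow_Suc[OF assms, of M e m] by (simp del: cpow.simps)
  qed
  finally show ?thesis .
qed

lemma Dact_Euler:
  fixes C :: "'n::finite \<Rightarrow> 'n \<Rightarrow> 'n \<Rightarrow> 'k::field_char_0"
  assumes "lie_structure C"
  shows "(\<Sum>c\<in>UNIV. ps_mul (ps_var c) (Dact C c X) m) = of_nat (deg m) * X m"
proof -
  have "(\<Sum>c\<in>UNIV. ps_mul (ps_var c) (Dact C c X) m)
      = (\<Sum>c\<in>UNIV. \<Sum>e\<in>UNIV. ps_mul (ps_deriv e X) (ps_mul (ps_var c) (phi C e c)) m)"
    by (simp only: Dact_eq ps_mul_sum_right finite_UNIV ps_mul_left_commute[of "ps_var _"])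
  also have "\<dots> = (\<Sum>e\<in>UNIV. ps_mul (ps_deriv e X)
                      (\<lambda>m. \<Sum>c\<in>UNIV. ps_mul (ps_var c) (phi C e c) m) m)"
    by (subst sum.swap) (simp add: ps_mul_sum_right)
  also have "\<dots> = (\<Sum>e\<in>UNIV. ps_mul (ps_var e) (ps_deriv e X) m)"
    by (simp add: sum_var_phi[OF assms] ps_mul_commute)
  also have "\<dots> = (\<Sum>e\<in>UNIV. of_nat (m e) * X m)"
    by (intro sum.cong refl) (auto simp: ps_mul_var ps_deriv_def)
  also have "\<dots> = of_nat (deg m) * X m"
    by (simp add: deg_def sum_distrib_right)
  finally show ?thesis .
qed

lemma cpow_Suc_left:
  "cpow C (Suc N) e f = (\<lambda>m. \<Sum>d\<in>UNIV. ps_mul (Cmat C e d) (cpow C N d f) m)"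
proof (induction N arbitrary: e f)
  case 0
  show ?case
    by (simp add: ps_setsum_def ps_mul_const ps_mul_commute[of "Cmat C _ _"]
        if_distrib[of "\<lambda>x. x * _"] cong: if_cong)
next
  case (Suc N)
  have "cpow C (Suc (Suc N)) e f
      = (\<lambda>m. \<Sum>g\<in>UNIV. \<Sum>d\<in>UNIV. ps_mul (Cmat C e d) (ps_mul (cpow C N d g) (Cmat C g f)) m)"
    by (simp only: cpow.simps(2)[of C "Suc N"] ps_setsum_def Suc ps_mul_sum_left finite_UNIV
        ps_mul_assoc)
  also have "\<dots> = (\<lambda>m. \<Sum>d\<in>UNIV. ps_mul (Cmat C e d)
                      (\<lambda>m. \<Sum>g\<in>UNIV. ps_mul (cpow C N d g) (Cmat C g f) m) m)"
    by (subst sum.swap) (simp add: ps_mul_sum_right)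
  finally show ?case
    by (simp only: cpow.simps ps_setsum_def)
qed

lemma ps_mul_cong_homog_right:
  assumes "homog 1 g" "deg m = Suc N" "\<And>p. deg p = N \<Longrightarrow> f p = f' p"
  shows "ps_mul f g m = ps_mul f' g m"
  unfolding ps_mul_def
proof (intro sum.cong refl)
  fix p assume "p \<in> {p. p \<le> m}"
  then have "deg p = N" if "g (\<lambda>i. m i - p i) \<noteq> 0"
    using that assms(1,2) deg_diff[of p m] deg_mono[of p m] by (auto simp: homog_def)
  then show "f p * g (\<lambda>i. m i - p i) = f' p * g (\<lambda>i. m i - p i)"
    using assms(3) by (cases "g (\<lambda>i. m i - p i) = 0") auto
qed

lemma Omat_Euler:
  fixes C :: "'n::finite \<Rightarrow> 'n \<Rightarrow> 'n \<Rightarrow> 'k::field_char_0"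
  shows "of_nat (deg m) * Omat C b a m = (\<Sum>d\<in>UNIV. ps_mul (Omat C b d) (Cmat C d a) m)"
proof (cases "deg m")
  case 0
  then show ?thesis by (simp add: deg_eq_0_iff ps_mul_def le_fun_def)
next
  case (Suc N)
  have "(\<Sum>d\<in>UNIV. ps_mul (Omat C b d) (Cmat C d a) m)
      = (\<Sum>d\<in>UNIV. ps_mul (\<lambda>p. inverse (fact N) * cpow C N b d p) (Cmat C d a) m)"
    by (intro sum.cong refl ps_mul_cong_homog_right[OF homog_Cmat Suc])
       (simp add: Omat_coeff field_simps)
  also have "\<dots> = cpow C (Suc N) b a m / fact N"
    by (simp add: ps_setsum_def ps_mul_scale_left sum_distrib_left divide_inverse mult.commute)
  also have "\<dots> = of_nat (deg m) * Omat C b a m"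
    using Suc of_nat_neq_0[of N, where 'a='k] by (simp add: Omat_coeff del: cpow.simps)
  finally show ?thesis ..
qed

lemma Oinv_Euler:
  fixes C :: "'n::finite \<Rightarrow> 'n \<Rightarrow> 'n \<Rightarrow> 'k::field_char_0"
  shows "of_nat (deg m) * Oinv C e f m = - (\<Sum>d\<in>UNIV. ps_mul (Cmat C e d) (Oinv C d f) m)"
proof (cases "deg m")
  case 0
  then show ?thesis
    by (simp only: ps_mul_commute[of "Cmat C e _"]) (simp add: deg_eq_0_iff ps_mul_def le_fun_def)
next
  case (Suc N)
  have "(\<Sum>d\<in>UNIV. ps_mul (Cmat C e d) (Oinv C d f) m)
      = (\<Sum>d\<in>UNIV. ps_mul (\<lambda>p. (-1) ^ N / fact N * cpow C N d f p) (Cmat C e d) m)"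
    unfolding ps_mul_commute[of "Cmat C e _"]
    by (intro sum.cong refl ps_mul_cong_homog_right[OF homog_Cmat Suc]) (simp add: Oinv_coeff)
  also have "\<dots> = (-1) ^ N / fact N * (\<Sum>d\<in>UNIV. ps_mul (Cmat C e d) (cpow C N d f) m)"
    by (simp only: ps_mul_scale_left) (simp add: sum_distrib_left ps_mul_commute[of "Cmat C _ _"])
  also have "\<dots> = (-1) ^ N / fact N * cpow C (Suc N) e f m"
    by (simp only: cpow_Suc_left)
  also have "\<dots> = - (of_nat (deg m) * Oinv C e f m)"
    using Suc of_nat_neq_0[of N, where 'a='k] by (simp add: Oinv_coeff del: cpow.simps)
  finally show ?thesis by simp
qed

text \<open>Uniqueness principle for the derivative formulas below: at a monomial \<open>m\<close> all of
  whose lower coefficients vanish, closedness makes \<open>(m\<^sub>c + 1) A\<^sub>e(m + \<delta>\<^sub>c - \<delta>\<^sub>e)\<close> symmetric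
  in \<open>c, e\<close>, so the Euler condition at \<open>m + \<delta>\<^sub>c\<close> reads \<open>(deg m + 1) A\<^sub>c(m) = 0\<close>.\<close>

lemma Euler_closed_family_coeff_zero:
  fixes A :: "'n::finite \<Rightarrow> 'i \<Rightarrow> ('n, 'k::field_char_0) ps"
  assumes euler: "\<And>i m. (\<Sum>e\<in>UNIV. ps_mul (ps_var e) (A e i) m) = 0"
    and closed: "\<And>a b i m. (\<And>c j. A c j m = 0) \<Longrightarrow> Dact C b (A a i) m = Dact C a (A b i) m"
    and low: "\<And>c j m'. deg m' < deg m \<Longrightarrow> A c j m' = 0"
  shows "A c i m = 0"
proof -
  define m' where "m' = m(c := Suc (m c))"
  have summand: "ps_mul (ps_var e) (A e i) m' * of_nat (Suc (m c)) = of_nat (m' e) * A c i m" for e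
  proof (cases "e = c \<or> m e = 0")
    case True
    then show ?thesis by (auto simp: m'_def ps_mul_var mult.commute)
  next
    case False
    define m'' where "m'' = m(e := m e - 1)"
    have deg_m'': "Suc (deg m'') = deg m"
      using False component_le_deg[of m e] by (simp add: m''_def deg_fun_upd)
    have "Dact C c (A e i) m'' = Dact C e (A c i) m''"
      by (rule closed) (rule low, simp add: deg_m''[symmetric])
    then have "of_nat (Suc (m'' c)) * A e i (m''(c := Suc (m'' c)))
             = of_nat (Suc (m'' e)) * A c i (m''(e := Suc (m'' e)))"
      using low[unfolded deg_m''[symmetric]] by (simp add: Dact_lowest_degree)
    moreover have "m''(c := Suc (m'' c)) = m'(e := m' e - 1)" "m''(e := Suc (m'' e)) = m"
      using False by (auto simp: m''_def m'_def fun_eq_iff)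
    moreover have "m'' c = m c" "Suc (m'' e) = m' e"
      using False by (auto simp: m''_def m'_def)
    ultimately show ?thesis
      using False by (simp add: m'_def ps_mul_var mult.commute)
  qed
  have "0 = (\<Sum>e\<in>UNIV. ps_mul (ps_var e) (A e i) m') * of_nat (Suc (m c))"
    by (simp add: euler)
  also have "\<dots> = of_nat (deg m') * A c i m"
    by (simp only: sum_distrib_right summand deg_def of_nat_sum)
  also have "deg m' = Suc (deg m)"
    using component_le_deg[of m c] by (simp add: m'_def deg_fun_upd)
  finally show ?thesis
    using of_nat_neq_0[of "deg m", where 'a='k] by simp
qed

lemma Euler_closed_family_eq_0:
  fixes A :: "'n::finite \<Rightarrow> 'i \<Rightarrow> ('n, 'k::field_char_0) ps"
  assumes euler: "\<And>i m. (\<Sum>e\<in>UNIV. ps_mul (ps_var e) (A e i) m) = 0"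
    and closed: "\<And>a b i m. (\<And>c j. A c j m = 0) \<Longrightarrow> Dact C b (A a i) m = Dact C a (A b i) m"
  shows "A c i m = 0"
proof (induction "deg m" arbitrary: c i m rule: less_induct)
  case less
  show ?case
    by (rule Euler_closed_family_coeff_zero[OF euler closed]) (use less in auto)
qed

lemma sum_mult_sum_swap:
  "(\<Sum>l\<in>L. P l * (\<Sum>g\<in>G. Q g l * R g)) = (\<Sum>g\<in>G. R g * (\<Sum>l\<in>L. P l * (Q g l :: 'a::comm_ring)))"
  unfolding sum_distrib_left by (subst sum.swap) (simp add: mult_ac)

lemma Dact_Omat:
  fixes C :: "'n::finite \<Rightarrow> 'n \<Rightarrow> 'n \<Rightarrow> 'k::field_char_0"
  assumes lie: "lie_structure C"
    and comm: "\<And>a b X m. Dact C b (Dact C a X) m - Dact C a (Dact C b X) m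
                         = (\<Sum>l\<in>UNIV. C l a b * Dact C l X m)"
  shows "Dact C c (Omat C e f) = (\<lambda>m. \<Sum>d\<in>UNIV. C d f c * Omat C e d m)"
proof -
  define A where "A c f m = Dact C c (Omat C e f) m - (\<Sum>d\<in>UNIV. C d f c * Omat C e d m)" for c f m
  have "A c f m = 0" for m
  proof (rule Euler_closed_family_eq_0[of A C])
    fix f m
    have "(\<Sum>c\<in>UNIV. ps_mul (ps_var c) (\<lambda>m. \<Sum>d\<in>UNIV. C d f c * Omat C e d m) m)
        = (\<Sum>d\<in>UNIV. ps_mul (Omat C e d) (Cmat C d f) m)"
    proof -
      have "(\<Sum>c\<in>UNIV. ps_mul (ps_var c) (\<lambda>m. \<Sum>d\<in>UNIV. C d f c * Omat C e d m) m)
          = (\<Sum>c\<in>UNIV. \<Sum>d\<in>UNIV. C d f c * ps_mul (Omat C e d) (ps_var c) m)"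
        by (simp add: ps_mul_commute[of "ps_var _"] ps_mul_sum_left ps_mul_scale_left)
      also have "\<dots> = (\<Sum>d\<in>UNIV. ps_mul (Omat C e d) (Cmat C d f) m)"
        by (subst sum.swap) (simp add: Cmat_eq ps_mul_sum_right ps_mul_scale_right)
      finally show ?thesis .
    qed
    then show "(\<Sum>c\<in>UNIV. ps_mul (ps_var c) (A c f) m) = 0"
      unfolding A_def[abs_def]
      by (simp add: ps_mul_diff_right sum_subtractf Dact_Euler[OF lie] Omat_Euler)
  next
    fix a b f m
    assume "\<And>c j. A c j m = 0"
    then have D: "Dact C x (Omat C e y) m = (\<Sum>g\<in>UNIV. C g y x * Omat C e g m)" for x y
      by (simp add: A_def)
    have DA: "Dact C y (A x f) m = Dact C y (Dact C x (Omat C e f)) m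
                - (\<Sum>d\<in>UNIV. C d f x * Dact C y (Omat C e d) m)" for x y
      by (simp add: A_def[abs_def] Dact_diff Dact_sum Dact_scale)
    have "Dact C b (A a f) m - Dact C a (A b f) m
        = (\<Sum>l\<in>UNIV. C l a b * Dact C l (Omat C e f) m)
          - (\<Sum>d\<in>UNIV. C d f a * Dact C b (Omat C e d) m)
          + (\<Sum>d\<in>UNIV. C d f b * Dact C a (Omat C e d) m)"
      unfolding DA comm[symmetric] by algebra
    also have "\<dots> = (\<Sum>g\<in>UNIV. Omat C e g m * ((\<Sum>l\<in>UNIV. C l a b * C g f l)
          - (\<Sum>d\<in>UNIV. C d f a * C g d b) + (\<Sum>d\<in>UNIV. C d f b * C g d a)))"
      unfolding D sum_mult_sum_swap by (simp add: algebra_simps sum.distrib sum_subtractf)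
    also have "\<dots> = 0"
      by (simp add: lie_structure_ad_bracket[OF lie])
    finally show "Dact C b (A a f) m = Dact C a (A b f) m"
      by simp
  qed
  then show ?thesis
    by (auto simp: A_def fun_eq_iff)
qed

lemma Dact_Oinv:
  fixes C :: "'n::finite \<Rightarrow> 'n \<Rightarrow> 'n \<Rightarrow> 'k::field_char_0"
  assumes lie: "lie_structure C"
    and comm: "\<And>a b X m. Dact C b (Dact C a X) m - Dact C a (Dact C b X) m
                         = (\<Sum>l\<in>UNIV. C l a b * Dact C l X m)"
  shows "Dact C c (Oinv C e f) = (\<lambda>m. - (\<Sum>d\<in>UNIV. C e d c * Oinv C d f m))"
proof -
  define A where "A c e m = Dact C c (Oinv C e f) m + (\<Sum>d\<in>UNIV. C e d c * Oinv C d f m)" for c e m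
  have "A c e m = 0" for m
  proof (rule Euler_closed_family_eq_0[of A C])
    fix e m
    have "(\<Sum>c\<in>UNIV. ps_mul (ps_var c) (\<lambda>m. \<Sum>d\<in>UNIV. C e d c * Oinv C d f m) m)
        = (\<Sum>d\<in>UNIV. ps_mul (Cmat C e d) (Oinv C d f) m)"
    proof -
      have "(\<Sum>c\<in>UNIV. ps_mul (ps_var c) (\<lambda>m. \<Sum>d\<in>UNIV. C e d c * Oinv C d f m) m)
          = (\<Sum>c\<in>UNIV. \<Sum>d\<in>UNIV. C e d c * ps_mul (ps_var c) (Oinv C d f) m)"
        by (simp add: ps_mul_sum_right ps_mul_scale_right)
      also have "\<dots> = (\<Sum>d\<in>UNIV. ps_mul (Cmat C e d) (Oinv C d f) m)"
        by (subst sum.swap) (simp add: Cmat_eq ps_mul_sum_left ps_mul_scale_left)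
      finally show ?thesis .
    qed
    then show "(\<Sum>c\<in>UNIV. ps_mul (ps_var c) (A c e) m) = 0"
      unfolding A_def[abs_def]
      by (simp add: ps_mul_add_right sum.distrib Dact_Euler[OF lie] Oinv_Euler)
  next
    fix a b e m
    assume "\<And>c j. A c j m = 0"
    then have D: "Dact C x (Oinv C y f) m = (\<Sum>g\<in>UNIV. - C y g x * Oinv C g f m)" for x y
      by (simp add: A_def eq_neg_iff_add_eq_0 sum_negf)
    have DA: "Dact C y (A x e) m = Dact C y (Dact C x (Oinv C e f)) m
                + (\<Sum>d\<in>UNIV. C e d x * Dact C y (Oinv C d f) m)" for x y
      by (simp add: A_def[abs_def] Dact_add Dact_sum Dact_scale)
    have "Dact C b (A a e) m - Dact C a (A b e) m
        = (\<Sum>l\<in>UNIV. C l a b * Dact C l (Oinv C e f) m)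
          + (\<Sum>d\<in>UNIV. C e d a * Dact C b (Oinv C d f) m)
          - (\<Sum>d\<in>UNIV. C e d b * Dact C a (Oinv C d f) m)"
      unfolding DA comm[symmetric] by algebra
    also have "\<dots> = (\<Sum>g\<in>UNIV. Oinv C g f m * ((\<Sum>l\<in>UNIV. C l a b * - C e g l)
          + (\<Sum>d\<in>UNIV. C e d a * - C d g b) - (\<Sum>d\<in>UNIV. C e d b * - C d g a)))"
      unfolding D sum_mult_sum_swap by (simp add: algebra_simps sum.distrib sum_subtractf)
    also have "\<dots> = 0"
      by (simp add: sum_negf lie_structure_ad_bracket[OF lie] mult.commute)
    finally show "Dact C b (A a e) m = Dact C a (A b e) m"
      by simp
  qed
  then show ?thesis
    by (auto simp: A_def fun_eq_iff eq_neg_iff_add_eq_0)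
qed

section \<open>The Heisenberg double \<open>H\<^sup>L\<close>\<close>

locale heisenberg_double =
  fixes C :: "'n::{finite,linorder} \<Rightarrow> 'n \<Rightarrow> 'n \<Rightarrow> 'k::field_char_0"
    and sc :: "'k \<Rightarrow> 'u::ring_1" and x :: "'n \<Rightarrow> 'u"
    and iU :: "'u \<Rightarrow> 'h::ring_1" and jS :: "('n, 'k) ps \<Rightarrow> 'h"
  assumes lie: "lie_structure C" and U: "is_Ug C sc x" and H: "is_HL C sc x iU jS"
begin

lemma sc_add: "sc (a + b) = sc a + sc b"
  using U unfolding is_Ug_def by (elim conjE allE) assumption

lemma sc_mult: "sc (a * b) = sc a * sc b"
  using U unfolding is_Ug_def by (elim conjE allE) assumption

lemma sc_one: "sc 1 = 1"
  using U unfolding is_Ug_def by (elim conjE allE) assumption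

lemma sc_commute: "sc c * u = u * sc c"
  using U unfolding is_Ug_def by (elim conjE allE) assumption

lemma sc_zero [simp]: "sc 0 = 0"
  using sc_add[of 0 0] by simp

lemma sc_minus: "sc (- a) = - sc a"
  using sc_add[of a "- a"] by (simp add: add_eq_0_iff)

lemma x_commutator: "x a * x e - x e * x a = (\<Sum>l\<in>UNIV. sc (C l a e) * x l)"
  using U unfolding is_Ug_def by (elim conjE allE) assumption

lemma x_bracket: "x a * x e = (\<Sum>l\<in>UNIV. sc (C l a e) * x l) + x e * x a"
  by (metis x_commutator diff_add_cancel)

lemma U_spanning: "\<exists>W c. finite W \<and> W \<subseteq> {w. sorted w} \<and> u = (\<Sum>w\<in>W. sc (c w) * pbw x w)"
  using U unfolding is_Ug_def by (elim conjE allE) assumption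

lemma U_induct [case_names zero add scale one x_mult]:
  assumes "P 0" "\<And>u v. P u \<Longrightarrow> P v \<Longrightarrow> P (u + v)" "\<And>k u. P u \<Longrightarrow> P (sc k * u)"
    and "P 1" "\<And>e u. P u \<Longrightarrow> P (x e * u)"
  shows "P u"
proof -
  obtain W c where "finite W" "u = (\<Sum>w\<in>W. sc (c w) * pbw x w)"
    using U_spanning by blast
  moreover have "P (pbw x w)" for w
    using assms(4,5) by (induction w) (simp_all add: pbw_def)
  ultimately show ?thesis
    using assms(1-3) by (induction W arbitrary: u rule: finite_induct) auto
qed

lemma iU_add: "iU (u + v) = iU u + iU v"
  using H unfolding is_HL_def by (elim conjE allE) assumption

lemma iU_mult: "iU (u * v) = iU u * iU v"
  using H unfolding is_HL_def by (elim conjE allE) assumption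

lemma iU_one: "iU 1 = 1"
  using H unfolding is_HL_def by (elim conjE allE) assumption

lemma jS_add: "jS (\<lambda>m. a m + b m) = jS a + jS b"
  using H unfolding is_HL_def ps_add_def by (elim conjE allE) assumption

lemma jS_mult: "jS (ps_mul a b) = jS a * jS b"
  using H unfolding is_HL_def by (elim conjE allE) assumption

lemma jS_const: "jS (ps_const c) = iU (sc c)"
  using H unfolding is_HL_def by (elim conjE allE) assumption

lemma jS_iU_x: "jS f * iU (x a) = iU (x a) * jS f + jS (Dact C a f)"
  using H unfolding is_HL_def by (elim conjE allE) assumption

lemma H_independent:
  "finite W \<Longrightarrow> W \<subseteq> {w. sorted w} \<Longrightarrow> (\<Sum>w\<in>W. iU (pbw x w) * jS (f w)) = 0
    \<Longrightarrow> w \<in> W \<Longrightarrow> f w = (\<lambda>_. 0)"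
  using H by (simp only: is_HL_def)

lemma H_spanning:
  "\<exists>W f. finite W \<and> W \<subseteq> {w. sorted w} \<and> h = (\<Sum>w\<in>W. iU (pbw x w) * jS (f w))"
  using H unfolding is_HL_def by (elim conjE allE) assumption

lemma iU_zero [simp]: "iU 0 = 0"
  using iU_add[of 0 0] by simp

lemma iU_diff: "iU (u - v) = iU u - iU v"
  by (metis diff_add_cancel eq_diff_eq iU_add)

lemma iU_sum: "iU (\<Sum>i\<in>I. f i) = (\<Sum>i\<in>I. iU (f i))"
  by (induction I rule: infinite_finite_induct) (auto simp: iU_add)

lemma jS_zero [simp]: "jS (\<lambda>_. 0) = 0"
  using jS_add[of "\<lambda>_. 0" "\<lambda>_. 0"] by simp

lemma jS_diff: "jS (\<lambda>m. a m - b m) = jS a - jS b"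
  using jS_add[of "\<lambda>m. a m - b m" b] by (simp add: eq_diff_eq)

lemma jS_sum: "jS (\<lambda>m. \<Sum>i\<in>I. X i m) = (\<Sum>i\<in>I. jS (X i))"
proof (induction I rule: infinite_finite_induct)
  case (insert i I)
  then show ?case
    using jS_add[of "X i" "\<lambda>m. \<Sum>i\<in>I. X i m"] by simp
qed simp_all

lemma jS_scale: "jS (\<lambda>m. k * a m) = iU (sc k) * jS a"
  using jS_mult[of "ps_const k" a] by (simp add: ps_mul_const jS_const)

lemma jS_commute: "jS a * jS b = jS b * jS a"
  by (metis jS_mult ps_mul_commute)

lemma sc_jS_commute: "iU (sc k) * jS a = jS a * iU (sc k)"
  by (metis jS_commute jS_const)

lemma jS_eq_0: "jS a = 0 \<Longrightarrow> a = (\<lambda>_. 0)"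
  using H_independent[of "{[]}" "\<lambda>_. a" "[]"] by (simp add: pbw_def iU_one)

text \<open>\<open>Dact\<close> is defined only as a derivation; that it integrates to a right action of \<open>U(g\<^sup>L)\<close>
  follows from associativity of \<open>H\<^sup>L\<close> and the cross relation.\<close>

lemma Dact_commutator:
  "Dact C b (Dact C a X) m - Dact C a (Dact C b X) m = (\<Sum>l\<in>UNIV. C l a b * Dact C l X m)"
proof -
  let ?D = "Dact C"
  have two: "jS X * iU (x a * x b) = iU (x a * x b) * jS X + iU (x a) * jS (?D b X)
               + iU (x b) * jS (?D a X) + jS (?D b (?D a X))" for a b
  proof -
    have "jS X * iU (x a * x b) = (jS X * iU (x a)) * iU (x b)"
      by (simp add: iU_mult mult.assoc)
    also have "\<dots> = iU (x a) * (jS X * iU (x b)) + jS (?D a X) * iU (x b)"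
      by (simp add: jS_iU_x distrib_right mult.assoc)
    also have "\<dots> = iU (x a * x b) * jS X + iU (x a) * jS (?D b X)
                   + iU (x b) * jS (?D a X) + jS (?D b (?D a X))"
      by (simp add: jS_iU_x distrib_left iU_mult mult.assoc add.assoc)
    finally show ?thesis .
  qed
  have "jS X * iU (x a * x b - x b * x a) = iU (x a * x b - x b * x a) * jS X
          + (jS (?D b (?D a X)) - jS (?D a (?D b X)))"
    by (simp add: iU_diff two algebra_simps)
  moreover have "jS X * iU (x a * x b - x b * x a) = iU (x a * x b - x b * x a) * jS X
          + (\<Sum>l\<in>UNIV. iU (sc (C l a b)) * jS (?D l X))"
  proof -
    have "jS X * iU (x a * x b - x b * x a) = (\<Sum>l\<in>UNIV. iU (sc (C l a b)) * (jS X * iU (x l)))"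
      by (simp add: x_commutator iU_sum iU_mult sum_distrib_left mult.assoc[symmetric] sc_jS_commute)
    then show ?thesis
      by (simp add: jS_iU_x distrib_left sum.distrib mult.assoc x_commutator iU_sum iU_mult sum_distrib_right)
  qed
  ultimately have "jS (\<lambda>m. ?D b (?D a X) m - ?D a (?D b X) m) = jS (\<lambda>m. \<Sum>l\<in>UNIV. C l a b * ?D l X m)"
    by (simp add: jS_diff jS_sum jS_scale)
  then have "jS (\<lambda>m. (?D b (?D a X) m - ?D a (?D b X) m) - (\<Sum>l\<in>UNIV. C l a b * ?D l X m)) = 0"
    by (simp add: jS_diff)
  from fun_cong[OF jS_eq_0[OF this], of m] show ?thesis
    by simp
qed

text \<open>\<open>id \<otimes> \<epsilon>\<^sub>S\<close>, computed through the PBW normal form \<open>\<Sum>\<^sub>w iU (pbw x w) * jS (f w)\<close> of an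
  element of \<open>H\<^sup>L\<close>.\<close>

definition id_eps :: "'h \<Rightarrow> 'u" where
  "id_eps h = (THE v. \<exists>W f. finite W \<and> W \<subseteq> {w. sorted w} \<and>
       h = (\<Sum>w\<in>W. iU (pbw x w) * jS (f w)) \<and> v = (\<Sum>w\<in>W. sc (eps_S (f w)) * pbw x w))"

lemma black_eq_id_eps: "black sc x iU jS h u = id_eps (h * iU u)"
  unfolding black_def id_eps_def ..

lemma PBW_sum_extend:
  assumes "finite W'" "W \<subseteq> W'"
  shows "(\<Sum>w\<in>W. iU (pbw x w) * jS (f w))
       = (\<Sum>w\<in>W'. iU (pbw x w) * jS (if w \<in> W then f w else (\<lambda>_. 0)))"
    and "(\<Sum>w\<in>W. sc (eps_S (f w)) * pbw x w)
       = (\<Sum>w\<in>W'. sc (eps_S (if w \<in> W then f w else (\<lambda>_. 0))) * pbw x w)"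
  using assms by (auto intro!: sum.mono_neutral_cong_left simp: eps_S_def)

lemma id_eps_well_defined:
  assumes W1: "finite W1" "W1 \<subseteq> {w. sorted w}" and W2: "finite W2" "W2 \<subseteq> {w. sorted w}"
    and eq: "(\<Sum>w\<in>W1. iU (pbw x w) * jS (f1 w)) = (\<Sum>w\<in>W2. iU (pbw x w) * jS (f2 w))"
  shows "(\<Sum>w\<in>W1. sc (eps_S (f1 w)) * pbw x w) = (\<Sum>w\<in>W2. sc (eps_S (f2 w)) * pbw x w)"
proof -
  let ?W = "W1 \<union> W2"
  define g1 where "g1 w = (if w \<in> W1 then f1 w else (\<lambda>_. 0))" for w
  define g2 where "g2 w = (if w \<in> W2 then f2 w else (\<lambda>_. 0))" for w
  have fin: "finite ?W" and sub: "W1 \<subseteq> ?W" "W2 \<subseteq> ?W"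
    using W1 W2 by auto
  have "(\<Sum>w\<in>?W. iU (pbw x w) * jS (\<lambda>m. g1 w m - g2 w m)) = 0"
    using eq by (simp add: jS_diff right_diff_distrib sum_subtractf g1_def g2_def
        PBW_sum_extend(1)[OF fin sub(1)] PBW_sum_extend(1)[OF fin sub(2)])
  then have "(\<lambda>m. g1 w m - g2 w m) = (\<lambda>_. 0)" if "w \<in> ?W" for w
    using H_independent[OF fin _ _ that] W1 W2 by auto
  then have "g1 w = g2 w" if "w \<in> ?W" for w
    using that by (auto simp: fun_eq_iff dest: fun_cong)
  then show ?thesis
    by (simp add: PBW_sum_extend(2)[OF fin sub(1)] PBW_sum_extend(2)[OF fin sub(2)]
        g1_def[symmetric] g2_def[symmetric])
qed

lemma id_eps_eq:
  assumes "finite W" "W \<subseteq> {w. sorted w}" "h = (\<Sum>w\<in>W. iU (pbw x w) * jS (f w))"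
  shows "id_eps h = (\<Sum>w\<in>W. sc (eps_S (f w)) * pbw x w)"
  unfolding id_eps_def
proof (rule the_equality)
  fix v
  assume "\<exists>W' f'. finite W' \<and> W' \<subseteq> {w. sorted w} \<and> h = (\<Sum>w\<in>W'. iU (pbw x w) * jS (f' w))
          \<and> v = (\<Sum>w\<in>W'. sc (eps_S (f' w)) * pbw x w)"
  then obtain W' f' where "finite W'" "W' \<subseteq> {w. sorted w}"
    "h = (\<Sum>w\<in>W'. iU (pbw x w) * jS (f' w))" and v: "v = (\<Sum>w\<in>W'. sc (eps_S (f' w)) * pbw x w)"
    by blast
  then show "v = (\<Sum>w\<in>W. sc (eps_S (f w)) * pbw x w)"
    unfolding v by (intro id_eps_well_defined) (use assms in simp_all)
next
  show "\<exists>W' f'. finite W' \<and> W' \<subseteq> {w. sorted w} \<and> h = (\<Sum>w\<in>W'. iU (pbw x w) * jS (f' w))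
      \<and> (\<Sum>w\<in>W. sc (eps_S (f w)) * pbw x w) = (\<Sum>w\<in>W'. sc (eps_S (f' w)) * pbw x w)"
    using assms by blast
qed

lemma id_eps_add: "id_eps (h1 + h2) = id_eps h1 + id_eps h2"
proof -
  obtain W1 f1 where r1: "finite W1" "W1 \<subseteq> {w. sorted w}" "h1 = (\<Sum>w\<in>W1. iU (pbw x w) * jS (f1 w))"
    using H_spanning by blast
  obtain W2 f2 where r2: "finite W2" "W2 \<subseteq> {w. sorted w}" "h2 = (\<Sum>w\<in>W2. iU (pbw x w) * jS (f2 w))"
    using H_spanning by blast
  let ?W = "W1 \<union> W2"
  define g1 where "g1 w = (if w \<in> W1 then f1 w else (\<lambda>_. 0))" for w
  define g2 where "g2 w = (if w \<in> W2 then f2 w else (\<lambda>_. 0))" for w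
  have fin: "finite ?W" and sub: "W1 \<subseteq> ?W" "W2 \<subseteq> ?W"
    using r1 r2 by auto
  have "h1 + h2 = (\<Sum>w\<in>?W. iU (pbw x w) * jS (\<lambda>m. g1 w m + g2 w m))"
    by (simp add: r1(3) r2(3) jS_add distrib_left sum.distrib g1_def g2_def
        PBW_sum_extend(1)[OF fin sub(1)] PBW_sum_extend(1)[OF fin sub(2)])
  then have "id_eps (h1 + h2) = (\<Sum>w\<in>?W. sc (eps_S (\<lambda>m. g1 w m + g2 w m)) * pbw x w)"
    by (rule id_eps_eq[OF fin, rotated]) (use r1 r2 in auto)
  also have "\<dots> = (\<Sum>w\<in>?W. sc (eps_S (g1 w)) * pbw x w) + (\<Sum>w\<in>?W. sc (eps_S (g2 w)) * pbw x w)"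
    by (simp add: eps_S_def sc_add distrib_right sum.distrib)
  also have "\<dots> = id_eps h1 + id_eps h2"
    by (simp add: id_eps_eq[OF r1] id_eps_eq[OF r2] g1_def g2_def
        PBW_sum_extend(2)[OF fin sub(1)] PBW_sum_extend(2)[OF fin sub(2)])
  finally show ?thesis .
qed

lemma id_eps_zero [simp]: "id_eps 0 = 0"
  using id_eps_add[of 0 0] by simp

lemma id_eps_sum: "id_eps (\<Sum>i\<in>I. h i) = (\<Sum>i\<in>I. id_eps (h i))"
  by (induction I rule: infinite_finite_induct) (auto simp: id_eps_add)

lemma id_eps_iU_jS: "id_eps (iU v * jS a) = sc (eps_S a) * v"
proof -
  obtain W c where r: "finite W" "W \<subseteq> {w. sorted w}" "v = (\<Sum>w\<in>W. sc (c w) * pbw x w)"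
    using U_spanning by blast
  have "iU v * jS a = (\<Sum>w\<in>W. iU (pbw x w) * jS (\<lambda>m. c w * a m))"
    by (simp add: r(3) iU_sum sum_distrib_right iU_mult jS_scale sc_commute mult.assoc)
  then have "id_eps (iU v * jS a) = (\<Sum>w\<in>W. sc (eps_S (\<lambda>m. c w * a m)) * pbw x w)"
    by (rule id_eps_eq[OF r(1,2)])
  also have "\<dots> = sc (eps_S a) * v"
    by (simp add: r(3) sum_distrib_left eps_S_def mult.commute[of "c _"] sc_mult mult.assoc)
  finally show ?thesis .
qed

lemma id_eps_iU: "id_eps (iU v) = v"
proof -
  have "jS (ps_const 1) = 1" "eps_S (ps_const (1::'k) :: ('n, 'k) ps) = 1"
    by (simp_all only: jS_const sc_one iU_one) (simp add: eps_S_def ps_const_def)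
  then show ?thesis
    using id_eps_iU_jS[of v "ps_const 1"] by (simp add: sc_one)
qed

lemma id_eps_iU_mult: "id_eps (iU u * h) = u * id_eps h"
proof -
  obtain W f where r: "finite W" "W \<subseteq> {w. sorted w}" "h = (\<Sum>w\<in>W. iU (pbw x w) * jS (f w))"
    using H_spanning by blast
  have "id_eps (iU u * h) = (\<Sum>w\<in>W. id_eps (iU (u * pbw x w) * jS (f w)))"
    by (simp add: r(3) sum_distrib_left id_eps_sum iU_mult mult.assoc)
  also have "\<dots> = u * id_eps h"
    by (simp add: id_eps_iU_jS id_eps_eq[OF r] sum_distrib_left sc_commute mult.assoc)
  finally show ?thesis .
qed

abbreviation act :: "('n, 'k) ps \<Rightarrow> 'u \<Rightarrow> 'u" where
  "act X \<equiv> black sc x iU jS (jS X)"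

lemma act_add: "act X (f + g) = act X f + act X g"
  by (simp add: black_eq_id_eps iU_add distrib_left id_eps_add)

lemma act_zero [simp]: "act X 0 = 0"
  by (simp add: black_eq_id_eps)

lemma act_scale: "act X (sc k * f) = sc k * act X f"
proof -
  have "jS X * iU (sc k * f) = iU (sc k) * (jS X * iU f)"
    by (simp add: iU_mult mult.assoc[symmetric] sc_jS_commute)
  then show ?thesis
    by (simp add: black_eq_id_eps id_eps_iU_mult)
qed

lemma act_one: "act X 1 = sc (eps_S X)"
  using id_eps_iU_jS[of 1 X] by (simp add: black_eq_id_eps iU_one)

lemma act_x_mult: "act X (x e * g) = x e * act X g + act (Dact C e X) g"
proof -
  have "jS X * iU (x e * g) = iU (x e) * (jS X * iU g) + jS (Dact C e X) * iU g"
    by (simp add: iU_mult mult.assoc[symmetric] jS_iU_x distrib_right)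
  then show ?thesis
    by (simp add: black_eq_id_eps id_eps_add id_eps_iU_mult)
qed

lemma act_lincomb: "act (\<lambda>m. \<Sum>d\<in>UNIV. k d * Y d m) g = (\<Sum>d\<in>UNIV. sc (k d) * act (Y d) g)"
proof -
  have "jS (\<lambda>m. \<Sum>d\<in>UNIV. k d * Y d m) * iU g = (\<Sum>d\<in>UNIV. iU (sc (k d)) * (jS (Y d) * iU g))"
    by (simp add: jS_sum jS_scale sum_distrib_right mult.assoc)
  then show ?thesis
    by (simp add: black_eq_id_eps id_eps_sum id_eps_iU_mult)
qed

lemma act_Omat_x_mult:
  "act (Omat C b a) (x e * g) = x e * act (Omat C b a) g + (\<Sum>d\<in>UNIV. sc (C d a e) * act (Omat C b d) g)"
  by (simp add: act_x_mult Dact_Omat[OF lie Dact_commutator] act_lincomb)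

lemma act_Oinv_x_mult:
  "act (Oinv C c a) (x e * g) = x e * act (Oinv C c a) g - (\<Sum>d\<in>UNIV. sc (C c d e) * act (Oinv C d a) g)"
proof -
  have "Dact C e (Oinv C c a) = (\<lambda>m. \<Sum>d\<in>UNIV. - C c d e * Oinv C d a m)"
    by (simp add: Dact_Oinv[OF lie Dact_commutator] sum_negf)
  then show ?thesis
    by (simp only: act_x_mult act_lincomb) (simp add: sc_minus sum_negf)
qed

lemma act_Omat_one: "act (Omat C b a) 1 = (if b = a then 1 else 0)"
  by (simp add: act_one eps_S_def Omat_coeff ps_const_def sc_one)

lemma act_Oinv_one: "act (Oinv C b a) 1 = (if b = a then 1 else 0)"
  by (simp add: act_one eps_S_def Oinv_coeff ps_const_def sc_one)

lemma mult_sc_left_commute: "u * (sc k * v) = sc k * (u * v)"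
  by (metis mult.assoc sc_commute)

section \<open>The identities for \<open>\<O>\<close> and \<open>\<O>\<^sup>-\<^sup>1\<close>\<close>

lemma x_mult_eq_sum_act_Omat: "x a * f = (\<Sum>b\<in>UNIV. act (Omat C b a) f * x b)"
proof (induction f arbitrary: a rule: U_induct)
  case zero
  then show ?case by simp
next
  case (add u v)
  then show ?case by (simp add: distrib_left distrib_right act_add sum.distrib)
next
  case (scale k u)
  then show ?case by (simp add: mult_sc_left_commute act_scale sum_distrib_left mult.assoc)
next
  case one
  then show ?case by (simp add: act_Omat_one if_distrib[of "\<lambda>t. t * _"] cong: if_cong)
next
  case (x_mult e u)
  have "x a * (x e * u) = (\<Sum>l\<in>UNIV. sc (C l a e) * (x l * u)) + x e * (x a * u)"
    by (simp add: mult.assoc[symmetric] x_bracket[of a e] distrib_right sum_distrib_right)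
  also have "\<dots> = (\<Sum>b\<in>UNIV. \<Sum>l\<in>UNIV. sc (C l a e) * act (Omat C b l) u * x b)
                 + (\<Sum>b\<in>UNIV. x e * act (Omat C b a) u * x b)"
    by (subst sum.swap) (simp add: x_mult.IH sum_distrib_left mult.assoc)
  also have "\<dots> = (\<Sum>b\<in>UNIV. act (Omat C b a) (x e * u) * x b)"
    by (simp add: act_Omat_x_mult distrib_right sum.distrib sum_distrib_right add.commute)
  finally show ?case .
qed

lemma act_Omat_mult:
  "act (Omat C c a) (g * f) = (\<Sum>b\<in>UNIV. act (Omat C b a) g * act (Omat C c b) f)"
proof (induction g arbitrary: a rule: U_induct)
  case zero
  then show ?case by simp
next
  case (add u v)
  then show ?case by (simp add: distrib_right act_add sum.distrib)
next
  case (scale k u)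
  then show ?case by (simp add: mult.assoc act_scale sum_distrib_left)
next
  case one
  then show ?case by (simp add: act_Omat_one if_distrib[of "\<lambda>t. t * _"] cong: if_cong)
next
  case (x_mult e u)
  have "act (Omat C c a) (x e * u * f)
      = x e * act (Omat C c a) (u * f) + (\<Sum>d\<in>UNIV. sc (C d a e) * act (Omat C c d) (u * f))"
    by (simp only: mult.assoc act_Omat_x_mult)
  also have "\<dots> = (\<Sum>b\<in>UNIV. x e * act (Omat C b a) u * act (Omat C c b) f)
                 + (\<Sum>d\<in>UNIV. \<Sum>b\<in>UNIV. sc (C d a e) * act (Omat C b d) u * act (Omat C c b) f)"
    by (simp only: x_mult.IH sum_distrib_left mult.assoc)
  also have "\<dots> = (\<Sum>b\<in>UNIV. x e * act (Omat C b a) u * act (Omat C c b) f)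
                 + (\<Sum>b\<in>UNIV. \<Sum>d\<in>UNIV. sc (C d a e) * act (Omat C b d) u * act (Omat C c b) f)"
    by (subst sum.swap) (rule refl)
  also have "\<dots> = (\<Sum>b\<in>UNIV. act (Omat C b a) (x e * u) * act (Omat C c b) f)"
    by (simp only: act_Omat_x_mult distrib_right sum.distrib sum_distrib_right)
  finally show ?case .
qed

lemma act_Oinv_mult:
  "act (Oinv C c a) (g * f) = (\<Sum>b\<in>UNIV. act (Oinv C c b) g * act (Oinv C b a) f)"
proof (induction g arbitrary: c rule: U_induct)
  case zero
  then show ?case by simp
next
  case (add u v)
  then show ?case by (simp add: distrib_right act_add sum.distrib)
next
  case (scale k u)
  then show ?case by (simp add: mult.assoc act_scale sum_distrib_left)
next
  case one
  then show ?case by (simp add: act_Oinv_one if_distrib[of "\<lambda>t. t * _"] cong: if_cong)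
next
  case (x_mult e u)
  have "act (Oinv C c a) (x e * u * f)
      = x e * act (Oinv C c a) (u * f) - (\<Sum>d\<in>UNIV. sc (C c d e) * act (Oinv C d a) (u * f))"
    by (simp only: mult.assoc act_Oinv_x_mult)
  also have "\<dots> = (\<Sum>b\<in>UNIV. x e * act (Oinv C c b) u * act (Oinv C b a) f)
                 - (\<Sum>d\<in>UNIV. \<Sum>b\<in>UNIV. sc (C c d e) * act (Oinv C d b) u * act (Oinv C b a) f)"
    by (simp only: x_mult.IH sum_distrib_left mult.assoc)
  also have "\<dots> = (\<Sum>b\<in>UNIV. x e * act (Oinv C c b) u * act (Oinv C b a) f)
                 - (\<Sum>b\<in>UNIV. \<Sum>d\<in>UNIV. sc (C c d e) * act (Oinv C d b) u * act (Oinv C b a) f)"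
    by (subst sum.swap) (rule refl)
  also have "\<dots> = (\<Sum>b\<in>UNIV. act (Oinv C c b) (x e * u) * act (Oinv C b a) f)"
    by (simp only: act_Oinv_x_mult left_diff_distrib sum_subtractf sum_distrib_right)
  finally show ?case .
qed

lemma sum_x_mult_act_Oinv: "(\<Sum>b\<in>UNIV. x b * act (Oinv C b a) f) = f * x a"
proof (induction f arbitrary: a rule: U_induct)
  case zero
  then show ?case by simp
next
  case (add u v)
  then show ?case by (simp add: distrib_left distrib_right act_add sum.distrib)
next
  case (scale k u)
  then show ?case by (simp add: act_scale mult_sc_left_commute sum_distrib_left[symmetric] mult.assoc)
next
  case one
  then show ?case by (simp add: act_Oinv_one if_distrib[of "\<lambda>t. _ * t"] cong: if_cong)
next
  case (x_mult e u)
  have bracket: "x b * x e * act (Oinv C b a) u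
      = x e * x b * act (Oinv C b a) u + (\<Sum>l\<in>UNIV. sc (C l b e) * (x l * act (Oinv C b a) u))"
    for b by (simp only: x_bracket[of b e] distrib_right sum_distrib_right mult.assoc add.commute)
  have "(\<Sum>b\<in>UNIV. x b * act (Oinv C b a) (x e * u))
      = (\<Sum>b\<in>UNIV. x b * x e * act (Oinv C b a) u)
        - (\<Sum>b\<in>UNIV. \<Sum>d\<in>UNIV. sc (C b d e) * (x b * act (Oinv C d a) u))"
    by (simp only: act_Oinv_x_mult right_diff_distrib sum_subtractf sum_distrib_left
        mult_sc_left_commute mult.assoc)
  also have "\<dots> = (\<Sum>b\<in>UNIV. x e * x b * act (Oinv C b a) u)
      + (\<Sum>b\<in>UNIV. \<Sum>l\<in>UNIV. sc (C l b e) * (x l * act (Oinv C b a) u))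
      - (\<Sum>b\<in>UNIV. \<Sum>d\<in>UNIV. sc (C b d e) * (x b * act (Oinv C d a) u))"
    by (simp only: bracket sum.distrib)
  also have "\<dots> = (\<Sum>b\<in>UNIV. x e * x b * act (Oinv C b a) u)"
    by (subst (2) sum.swap) simp
  also have "\<dots> = x e * u * x a"
    by (simp only: x_mult.IH[symmetric] sum_distrib_left mult.assoc)
  finally show ?case .
qed

lemma black_iU_x: "black sc x iU jS (iU (x b)) h = x b * h"
  by (simp add: black_eq_id_eps id_eps_iU_mult id_eps_iU)

lemma black_iU_x_mult:
  "black sc x iU jS (iU (x a)) f * g
    = (\<Sum>b\<in>UNIV. black sc x iU jS (jS (Omat C b a)) f * black sc x iU jS (iU (x b)) g)"
proof -
  have "black sc x iU jS (iU (x a)) f * g = (\<Sum>b\<in>UNIV. act (Omat C b a) f * x b) * g"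
    by (simp only: black_iU_x x_mult_eq_sum_act_Omat[symmetric])
  then show ?thesis
    by (simp add: black_iU_x sum_distrib_right mult.assoc)
qed

lemma black_y:
  assumes "\<And>a. y a = (\<Sum>b\<in>UNIV. iU (x b) * jS (Oinv C b a))"
  shows "black sc x iU jS (y a) f = f * x a"
proof -
  have "y a * iU f = (\<Sum>b\<in>UNIV. iU (x b) * (jS (Oinv C b a) * iU f))"
    by (simp add: assms sum_distrib_right mult.assoc)
  then show ?thesis
    using sum_x_mult_act_Oinv[of a f] by (simp add: black_eq_id_eps id_eps_sum id_eps_iU_mult)
qed

end

theorem theorem2:
  fixes C :: "'n::{finite,linorder} \<Rightarrow> 'n \<Rightarrow> 'n \<Rightarrow> 'k::field_char_0"
    and sc :: "'k \<Rightarrow> 'u::ring_1" and x :: "'n \<Rightarrow> 'u"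
    and iU :: "'u \<Rightarrow> 'h::ring_1" and jS :: "('n, 'k) ps \<Rightarrow> 'h"
    and y :: "'n \<Rightarrow> 'h"
  assumes lie: "lie_structure C"
    and U: "is_Ug C sc x"
    and H: "is_HL C sc x iU jS"
    and y_def: "\<And>a. y a = (\<Sum>b\<in>UNIV. iU (x b) * jS (Oinv C b a))"
  shows "(\<forall>a f. x a * f = (\<Sum>b\<in>UNIV. black sc x iU jS (jS (Omat C b a)) f * x b)) \<and>
    (\<forall>a g f c. black sc x iU jS (jS (Omat C c a)) (g * f)
           = (\<Sum>b\<in>UNIV. black sc x iU jS (jS (Omat C b a)) g * black sc x iU jS (jS (Omat C c b)) f)) \<and>
    (\<forall>a g f c. black sc x iU jS (jS (Oinv C c a)) (g * f)
           = (\<Sum>b\<in>UNIV. black sc x iU jS (jS (Oinv C c b)) g * black sc x iU jS (jS (Oinv C b a)) f)) \<and>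
    (\<forall>a f. black sc x iU jS (y a) f = f * x a) \<and>
    (\<forall>a f g. black sc x iU jS (iU (x a)) f * g
           = (\<Sum>b\<in>UNIV. black sc x iU jS (jS (Omat C b a)) f * black sc x iU jS (iU (x b)) g))"
proof -
  interpret heisenberg_double C sc x iU jS
    by (rule heisenberg_double.intro[OF lie U H])
  show ?thesis
    using x_mult_eq_sum_act_Omat act_Omat_mult act_Oinv_mult black_y[OF y_def] black_iU_x_mult
    by blast
qed

end
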